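(* Let $(a,b,c)\in\mathbb{Z}^3$ be a primitive triple with $a^2+b^3=c^{10}$, and suppose that $f(x)=x^3+3bx-2a$ is irreducible over $\mathbb{Q}$. Then the splitting field of $f$ over $\mathbb{Q}$ is isomorphic to the splitting field of $x^3-6x-6$ over $\mathbb{Q}$; equivalently $\mathbb{Q}(E_{(a,b,c)}[2])\cong\mathbb{Q}(E_{(3,-2,1)}[2])$.
   Context: A triple $(a,b,c)$ is primitive if $\gcd(a,b,c)=1$. $E_{(a,b,c)}$ denotes the curve $Y^2=X^3+3bX-2a$, and $\mathbb{Q}(E[2])$ denotes the field generated by the coordinates of the $2$-torsion points, i.e. the splitting field of the cubic. *)

theory Defs
  imports "HOL-Computational_Algebra.Polynomial_Factorial" Complex_Main
begin

definition is_subfield_C :: "complex set \<Rightarrow> bool" where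
  "is_subfield_C K \<longleftrightarrow> 0 \<in> K \<and> 1 \<in> K \<and>
     (\<forall>x\<in>K. \<forall>y\<in>K. x + y \<in> K \<and> x * y \<in> K) \<and>
     (\<forall>x\<in>K. - x \<in> K) \<and> (\<forall>x\<in>K. x \<noteq> 0 \<longrightarrow> inverse x \<in> K)"

definition gen_subfield_C :: "complex set \<Rightarrow> complex set" where
  "gen_subfield_C S = \<Inter>{K. S \<subseteq> K \<and> is_subfield_C K}"

text \<open>Splitting field over Q of a rational polynomial, realised inside C:
  the field generated over Q by all complex roots of p.\<close>
definition splitting_field_C :: "rat poly \<Rightarrow> complex set" where
  "splitting_field_C p = gen_subfield_C {z. poly (map_poly of_rat p) z = 0}"

definition fields_isomorphic :: "complex set \<Rightarrow> complex set \<Rightarrow> bool" where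
  "fields_isomorphic K L \<longleftrightarrow> (\<exists>f. bij_betw f K L \<and>
     (\<forall>x\<in>K. \<forall>y\<in>K. f (x + y) = f x + f y \<and> f (x * y) = f x * f y))"

end

theory Submission
  imports Defs "HOL-Computational_Algebra.Nth_Powers"
begin

text \<open>Put \<open>C = c\<^sup>5\<close>, so that \<open>a\<^sup>2 + b\<^sup>3 = C\<^sup>2\<close>. By Cardano, the roots of \<open>x\<^sup>3 + 3bx - 2a\<close> are
  \<open>u + v\<close>, \<open>\<omega>u + \<omega>\<^sup>2v\<close>, \<open>\<omega>\<^sup>2u + \<omega>v\<close> with \<open>u\<^sup>3 = a + C\<close>, \<open>uv = -b\<close> and \<open>\<omega>\<close> a primitive
  cube root of unity; as \<open>C \<noteq> 0\<close>, the splitting field is \<open>\<rat>(u, \<omega>)\<close>. Since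
  \<open>(a + C)(a - C) = (-b)\<^sup>3\<close> and \<open>gcd(a + C, a - C)\<close> divides 2, either \<open>a + C\<close> is a cube, which
  gives a rational root and contradicts irreducibility, or one of \<open>a \<plusminus> C\<close> is twice a nonzero cube
  \<open>s\<^sup>3\<close>. Then \<open>u\<close> is \<open>s\<close> times a cube root of 2, so the splitting field is \<open>\<rat>(\<surd>\<^sup>32, \<omega>)\<close>, which
  is also the splitting field of \<open>x\<^sup>3 - 6x - 6\<close> (the case \<open>a = 3\<close>, \<open>b = -2\<close>, \<open>C = -1\<close>).\<close>

lemma subfield_C_add: "is_subfield_C K \<Longrightarrow> x \<in> K \<Longrightarrow> y \<in> K \<Longrightarrow> x + y \<in> K"
  and subfield_C_mult: "is_subfield_C K \<Longrightarrow> x \<in> K \<Longrightarrow> y \<in> K \<Longrightarrow> x * y \<in> K"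
  and subfield_C_uminus: "is_subfield_C K \<Longrightarrow> x \<in> K \<Longrightarrow> - x \<in> K"
  and subfield_C_zero: "is_subfield_C K \<Longrightarrow> 0 \<in> K"
  and subfield_C_one: "is_subfield_C K \<Longrightarrow> 1 \<in> K"
  unfolding is_subfield_C_def by auto

lemma subfield_C_inverse: "is_subfield_C K \<Longrightarrow> x \<in> K \<Longrightarrow> inverse x \<in> K"
  unfolding is_subfield_C_def by (cases "x = 0") simp_all

lemma subfield_C_diff: "is_subfield_C K \<Longrightarrow> x \<in> K \<Longrightarrow> y \<in> K \<Longrightarrow> x - y \<in> K"
  unfolding diff_conv_add_uminus by (intro subfield_C_add subfield_C_uminus)

lemma subfield_C_divide: "is_subfield_C K \<Longrightarrow> x \<in> K \<Longrightarrow> y \<in> K \<Longrightarrow> x / y \<in> K"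
  unfolding divide_inverse by (intro subfield_C_mult subfield_C_inverse)

lemma subfield_C_power: "is_subfield_C K \<Longrightarrow> x \<in> K \<Longrightarrow> x ^ n \<in> K"
  by (induction n) (simp_all add: subfield_C_mult subfield_C_one)

lemma subfield_C_of_nat: "is_subfield_C K \<Longrightarrow> of_nat n \<in> K"
  by (induction n) (simp_all add: subfield_C_add subfield_C_zero subfield_C_one)

lemma subfield_C_of_int:
  assumes "is_subfield_C K"
  shows "of_int n \<in> K"
proof (cases "n \<ge> 0")
  case True
  then show ?thesis using subfield_C_of_nat[OF assms, of "nat n"] by simp
next
  case False
  then show ?thesis using subfield_C_uminus[OF assms subfield_C_of_nat[OF assms, of "nat (- n)"]] by simp
qed

lemma subfield_C_numeral: "is_subfield_C K \<Longrightarrow> numeral n \<in> K"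
  using subfield_C_of_nat[of K "numeral n"] by simp

lemma subfield_C_of_rat:
  assumes "is_subfield_C K"
  shows "of_rat q \<in> K"
proof (cases q)
  case (Fract a b)
  then show ?thesis by (simp add: of_rat_rat assms subfield_C_divide subfield_C_of_int)
qed

lemma is_subfield_C_gen_subfield_C: "is_subfield_C (gen_subfield_C S)"
  unfolding gen_subfield_C_def is_subfield_C_def by blast

lemma gen_subfield_C_superset: "S \<subseteq> gen_subfield_C S"
  unfolding gen_subfield_C_def by auto

lemma gen_subfield_C_least: "is_subfield_C K \<Longrightarrow> S \<subseteq> K \<Longrightarrow> gen_subfield_C S \<subseteq> K"
  unfolding gen_subfield_C_def by auto

lemma gen_subfield_C_eqI:
  "S \<subseteq> gen_subfield_C T \<Longrightarrow> T \<subseteq> gen_subfield_C S \<Longrightarrow> gen_subfield_C S = gen_subfield_C T"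
  by (simp add: gen_subfield_C_least is_subfield_C_gen_subfield_C subset_antisym)

lemma gen_subfield_C_insert_scale:
  assumes "q \<noteq> 0"
  shows "gen_subfield_C (insert (of_rat q * t) S) = gen_subfield_C (insert t S)"
proof (rule gen_subfield_C_eqI)
  let ?K = "gen_subfield_C (insert t S)"
  have K: "is_subfield_C ?K" by (rule is_subfield_C_gen_subfield_C)
  have tK: "t \<in> ?K" and SK: "S \<subseteq> ?K" using gen_subfield_C_superset[of "insert t S"] by auto
  have "of_rat q * t \<in> ?K" using subfield_C_mult[OF K subfield_C_of_rat[OF K] tK] .
  then show "insert (of_rat q * t) S \<subseteq> ?K" using SK by simp
next
  let ?L = "gen_subfield_C (insert (of_rat q * t) S)"
  have L: "is_subfield_C ?L" by (rule is_subfield_C_gen_subfield_C)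
  have qtL: "of_rat q * t \<in> ?L" and SL: "S \<subseteq> ?L"
    using gen_subfield_C_superset[of "insert (of_rat q * t) S"] by auto
  have "of_rat q * t / of_rat q \<in> ?L" using subfield_C_divide[OF L qtL subfield_C_of_rat[OF L]] .
  then show "insert t S \<subseteq> ?L" using SL assms by simp
qed

lemma cardano_conjugate_cube:
  fixes A B C u :: "'a::field"
  assumes "u \<noteq> 0" "u ^ 3 = A + C" "C ^ 2 = A ^ 2 + B ^ 3"
  shows "(- B / u) ^ 3 = A - C"
proof -
  have "u ^ 3 * (- B / u) ^ 3 = (- B) ^ 3"
    using assms(1) by (simp flip: power_mult_distrib)
  also have "\<dots> = u ^ 3 * (A - C)"
    using assms(2,3) by (simp add: algebra_simps power2_eq_square)
  finally show ?thesis using assms(1) by (subst (asm) mult_left_cancel) simp_all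
qed

lemma depressed_cubic_factorization:
  fixes \<omega> u v A B z :: "'a::idom"
  assumes "\<omega> ^ 2 + \<omega> + 1 = 0" "u * v = - B" "u ^ 3 + v ^ 3 = 2 * A"
  shows "z ^ 3 + 3 * B * z - 2 * A
    = (z - (u + v)) * (z - (\<omega> * u + \<omega> ^ 2 * v)) * (z - (\<omega> ^ 2 * u + \<omega> * v))"
  using assms by algebra

lemma depressed_cubic_sum_root:
  fixes u v A B :: "'a::idom"
  assumes "u * v = - B" "u ^ 3 + v ^ 3 = 2 * A"
  shows "(u + v) ^ 3 + 3 * B * (u + v) - 2 * A = 0"
  using assms by algebra

lemma depressed_cubic_cardano_root:
  fixes A B C u :: "'a::field"
  assumes "u \<noteq> 0" "u ^ 3 = A + C" "C ^ 2 = A ^ 2 + B ^ 3"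
  shows "poly [:- 2 * A, 3 * B, 0, 1:] (u - B / u) = 0"
proof -
  have "u * (- B / u) = - B" using assms(1) by simp
  moreover have "u ^ 3 + (- B / u) ^ 3 = 2 * A"
    using assms(2) cardano_conjugate_cube[OF assms] by simp
  ultimately have "(u + - B / u) ^ 3 + 3 * B * (u + - B / u) - 2 * A = 0"
    by (rule depressed_cubic_sum_root)
  then show ?thesis by (simp add: algebra_simps power3_eq_cube)
qed

lemma irreducible_field_poly_no_root:
  fixes p :: "'a::field poly"
  assumes "irreducible p" "degree p \<ge> 2"
  shows "poly p r \<noteq> 0"
proof
  assume "poly p r = 0"
  then have "[:-r, 1:] dvd p" by (simp add: poly_eq_0_iff_dvd)
  then obtain q where q: "p = [:-r, 1:] * q" by (elim dvdE)
  have q0: "q \<noteq> 0" using q assms(2) by auto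
  then have "degree p = degree [:-r, 1:] + degree q" unfolding q by (intro degree_mult_eq) auto
  then have "degree q \<noteq> 0" using assms(2) by simp
  then have "\<not> is_unit q" using q0 by (simp add: is_unit_iff_degree)
  moreover have "\<not> is_unit [:-r, 1:]" by (simp add: is_unit_iff_degree)
  ultimately show False using irreducibleD[OF assms(1) q] by blast
qed

lemma irreducible_depressed_cubic_no_cardano_cube:
  fixes A B C q :: "'a::field"
  assumes "irreducible [:- 2 * A, 3 * B, 0, 1:]" "C ^ 2 = A ^ 2 + B ^ 3" "q ^ 3 = A + C"
  shows "q = 0"
  using depressed_cubic_cardano_root[OF _ assms(3,2)] irreducible_field_poly_no_root[OF assms(1)]
  by fastforce

lemma roots_depressed_cubic:
  fixes A B C u \<omega> :: "'a::field"
  assumes "\<omega> ^ 2 + \<omega> + 1 = 0" "u \<noteq> 0" "u ^ 3 = A + C" "C ^ 2 = A ^ 2 + B ^ 3"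
  defines "v \<equiv> - B / u"
  shows "{z. z ^ 3 + 3 * B * z - 2 * A = 0} = {u + v, \<omega> * u + \<omega> ^ 2 * v, \<omega> ^ 2 * u + \<omega> * v}"
proof -
  have "u * v = - B" using assms(2) by (simp add: v_def)
  moreover have "u ^ 3 + v ^ 3 = 2 * A"
    using assms(3) cardano_conjugate_cube[OF assms(2-4)] by (simp add: v_def)
  ultimately have "z ^ 3 + 3 * B * z - 2 * A = 0 \<longleftrightarrow>
      z \<in> {u + v, \<omega> * u + \<omega> ^ 2 * v, \<omega> ^ 2 * u + \<omega> * v}" for z
    by (subst depressed_cubic_factorization[OF assms(1)]) simp_all
  then show ?thesis by blast
qed

lemma depressed_cubic_root_differences:
  fixes \<omega> u v :: "'a::idom"
  assumes "\<omega> ^ 2 + \<omega> + 1 = 0"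
  shows "((u + v) - (\<omega> * u + \<omega> ^ 2 * v)) * ((\<omega> * u + \<omega> ^ 2 * v) - (\<omega> ^ 2 * u + \<omega> * v))
      * ((\<omega> ^ 2 * u + \<omega> * v) - (u + v)) = - 3 * (2 * \<omega> + 1) * (u ^ 3 - v ^ 3)"
  using assms by algebra

lemma depressed_cubic_lagrange_resolvent:
  fixes \<omega> u v :: "'a::idom"
  assumes "\<omega> ^ 2 + \<omega> + 1 = 0"
  shows "(u + v) + \<omega> ^ 2 * (\<omega> * u + \<omega> ^ 2 * v) + \<omega> * (\<omega> ^ 2 * u + \<omega> * v) = 3 * u"
  using assms by algebra

lemma splitting_field_C_depressed_cubic:
  fixes A B C :: rat and u \<omega> :: complex
  assumes \<omega>: "\<omega> ^ 2 + \<omega> + 1 = 0" and C: "C ^ 2 = A ^ 2 + B ^ 3" "C \<noteq> 0"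
    and u: "u \<noteq> 0" "u ^ 3 = of_rat (A + C)"
  shows "splitting_field_C [:- 2 * A, 3 * B, 0, 1:] = gen_subfield_C {u, \<omega>}"
proof -
  define v where "v = - of_rat B / u"
  define r0 r1 r2 where "r0 = u + v" "r1 = \<omega> * u + \<omega> ^ 2 * v" "r2 = \<omega> ^ 2 * u + \<omega> * v"
  have C': "of_rat C ^ 2 = of_rat A ^ 2 + (of_rat B :: complex) ^ 3"
    using arg_cong[OF C(1), of of_rat] by (simp add: of_rat_add of_rat_power)
  have u': "u ^ 3 = of_rat A + of_rat C" using u(2) by (simp add: of_rat_add)
  have "{z. poly (map_poly of_rat [:- 2 * A, 3 * B, 0, 1:]) z = 0}
      = {z. z ^ 3 + 3 * of_rat B * z - 2 * of_rat A = 0}"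
    by (simp add: map_poly_pCons of_rat_mult of_rat_minus algebra_simps power3_eq_cube)
  also have "\<dots> = {r0, r1, r2}"
    unfolding r0_r1_r2_def v_def using roots_depressed_cubic[OF \<omega> u(1) u' C'] .
  finally have roots: "splitting_field_C [:- 2 * A, 3 * B, 0, 1:] = gen_subfield_C {r0, r1, r2}"
    unfolding splitting_field_C_def by simp
  let ?K = "gen_subfield_C {u, \<omega>}" and ?L = "gen_subfield_C {r0, r1, r2}"
  have K: "is_subfield_C ?K" and L: "is_subfield_C ?L" by (rule is_subfield_C_gen_subfield_C)+
  have uK: "u \<in> ?K" and \<omega>K: "\<omega> \<in> ?K" using gen_subfield_C_superset[of "{u, \<omega>}"] by auto
  have "v = of_rat (- B) / u" by (simp add: v_def of_rat_minus)
  then have "v \<in> ?K" using K uK by (simp add: subfield_C_divide subfield_C_of_rat)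
  then have "{r0, r1, r2} \<subseteq> ?K"
    unfolding r0_r1_r2_def using K uK \<omega>K by (simp add: subfield_C_add subfield_C_mult subfield_C_power)
  moreover have "{u, \<omega>} \<subseteq> ?L"
  proof -
    have rL: "r0 \<in> ?L" "r1 \<in> ?L" "r2 \<in> ?L" using gen_subfield_C_superset[of "{r0, r1, r2}"] by auto
    have v3: "v ^ 3 = of_rat A - of_rat C"
      unfolding v_def using cardano_conjugate_cube[OF u(1) u' C'] .
    txt \<open>The square root of the discriminant is \<open>-6C(2\<omega> + 1)\<close>, so it recovers \<open>\<omega>\<close>.\<close>
    have "(r0 - r1) * (r1 - r2) * (r2 - r0) = - 3 * (2 * \<omega> + 1) * (u ^ 3 - v ^ 3)"
      unfolding r0_r1_r2_def by (rule depressed_cubic_root_differences[OF \<omega>])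
    also have "\<dots> = of_rat (- 6 * C) * (2 * \<omega> + 1)"
      by (simp add: u' v3 of_rat_mult of_rat_minus algebra_simps)
    finally have "\<omega> = ((r0 - r1) * (r1 - r2) * (r2 - r0) / of_rat (- 6 * C) - 1) / 2"
      using C(2) by (simp add: field_simps)
    also have "\<dots> \<in> ?L"
      using L rL by (simp add: subfield_C_divide subfield_C_diff subfield_C_mult subfield_C_of_rat
        subfield_C_one subfield_C_numeral)
    finally have \<omega>L: "\<omega> \<in> ?L" .
    have "u = ((r0 + \<omega> ^ 2 * r1 + \<omega> * r2) / 3)"
      unfolding r0_r1_r2_def depressed_cubic_lagrange_resolvent[OF \<omega>] by simp
    also have "\<dots> \<in> ?L" using L rL \<omega>L
      by (simp add: subfield_C_divide subfield_C_add subfield_C_mult subfield_C_power subfield_C_numeral)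
    finally show ?thesis using \<omega>L by blast
  qed
  ultimately show ?thesis unfolding roots by (intro gen_subfield_C_eqI)
qed

lemma splitting_field_C_depressed_cubic_twice_cube:
  fixes A B C s :: rat
  assumes "C ^ 2 = A ^ 2 + B ^ 3" "C \<noteq> 0" "s \<noteq> 0" "A + C = 2 * s ^ 3"
  shows "splitting_field_C [:- 2 * A, 3 * B, 0, 1:] = splitting_field_C [:- 6, - 6, 0, 1:]"
proof -
  define \<omega> where "\<omega> = Complex (- 1 / 2) (sqrt 3 / 2)"
  have \<omega>: "\<omega> ^ 2 + \<omega> + 1 = 0" by (simp add: \<omega>_def complex_eq_iff power2_eq_square)
  define t where "t = complex_of_real (root 3 2)"
  have t: "t ^ 3 = 2" by (simp add: t_def flip: of_real_power)
  have "(of_rat s * t) ^ 3 = of_rat (A + C)"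
    using t assms(4) by (simp add: power_mult_distrib of_rat_mult of_rat_power)
  then have "splitting_field_C [:- 2 * A, 3 * B, 0, 1:] = gen_subfield_C {of_rat s * t, \<omega>}"
    using assms(1-3) t by (intro splitting_field_C_depressed_cubic[OF \<omega>]) auto
  also have "\<dots> = gen_subfield_C {t, \<omega>}"
    using assms(3) by (rule gen_subfield_C_insert_scale)
  also have "\<dots> = splitting_field_C [:- 6, - 6, 0, 1:]"
    using splitting_field_C_depressed_cubic[OF \<omega>, of "- 1" 3 "- 2" t] t by force
  finally show ?thesis .
qed

lemma coprime_mult_eq_cube_int:
  fixes x y z :: int
  assumes "coprime x y" "x * y = z ^ 3"
  shows "\<exists>s. x = s ^ 3"
proof (cases "x = 0 \<or> y = 0")
  case True
  then have "x = 0 \<or> \<bar>x\<bar> = 1" using assms(1) zdvd1_eq by auto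
  then have "x = 0 ^ 3 \<or> x = 1 ^ 3 \<or> x = (- 1) ^ 3" by (auto simp: abs_eq_iff)
  then show ?thesis by blast
next
  case False
  have "\<bar>x\<bar> * \<bar>y\<bar> = \<bar>z\<bar> ^ 3" using assms(2) by (metis abs_mult power_abs)
  then have "nat \<bar>x\<bar> * nat \<bar>y\<bar> = nat \<bar>z\<bar> ^ 3"
    by (metis nat_abs_mult_distrib nat_power_eq abs_ge_zero abs_mult)
  moreover have "coprime (nat \<bar>x\<bar>) (nat \<bar>y\<bar>)" using assms(1) by (simp flip: coprime_int_iff)
  ultimately have "is_nth_power 3 (nat \<bar>x\<bar>)"
    using False is_nth_power_mult_coprime_natD(1)[of "nat \<bar>x\<bar>" "nat \<bar>y\<bar>" 3] by auto
  then obtain t where "nat \<bar>x\<bar> = t ^ 3" by (auto elim: is_nth_powerE)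
  then have "\<bar>x\<bar> = int t ^ 3" by (metis abs_ge_zero int_nat_eq of_nat_power)
  then have "x = int t ^ 3 \<or> x = (- int t) ^ 3" by (auto simp: abs_eq_iff)
  then show ?thesis by blast
qed

lemma coprime_of_primitive_power_sum:
  fixes a b c :: int
  assumes "gcd a (gcd b c) = 1" "a ^ i + b ^ j = c ^ k" "i > 0" "k > 0"
  shows "coprime a c"
proof (rule coprimeI)
  fix d assume da: "d dvd a" and dc: "d dvd c"
  have "c dvd c ^ k" "a dvd a ^ i" using assms(3,4) by simp_all
  then have "d dvd c ^ k - a ^ i" using da dc by (intro dvd_diff) (blast intro: dvd_trans)+
  also have "c ^ k - a ^ i = b ^ j" using assms(2) by simp
  finally have "d dvd b ^ j" .
  moreover have "gcd d b dvd gcd a (gcd b c)"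
    using da dc by (meson dvd_trans gcd_dvd1 gcd_dvd2 gcd_greatest)
  then have "coprime d b" using assms(1) by (simp add: coprime_iff_gcd_eq_1 is_unit_gcd)
  then have "coprime d (b ^ j)" by simp
  ultimately show "is_unit d" using coprime_common_divisor[of d "b ^ j" d] by simp
qed

lemma gcd_add_diff_dvd_2:
  fixes a C :: int
  assumes "coprime a C"
  shows "gcd (a + C) (a - C) dvd 2"
proof -
  let ?g = "gcd (a + C) (a - C)"
  have "2 * a = (a + C) + (a - C)" "2 * C = (a + C) - (a - C)" by simp_all
  then have "?g dvd 2 * a" "?g dvd 2 * C" by (metis dvd_add dvd_diff gcd_dvd1 gcd_dvd2)+
  then have "?g dvd gcd (2 * a) (2 * C)" by simp
  also have "gcd (2 * a) (2 * C) = 2"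
    using assms by (simp add: gcd_mult_left coprime_iff_gcd_eq_1)
  finally show ?thesis .
qed

lemma coprime_odd_mult_eq_twice_cube:
  fixes x y k :: int
  assumes "coprime x y" "odd x" "x * y = 2 * k ^ 3"
  shows "\<exists>s. s \<noteq> 0 \<and> x = s ^ 3"
proof -
  have "coprime x 2" using assms(2) by simp
  then have "coprime x (2 ^ 2)" by (simp only: coprime_power_right_iff) simp
  then have "coprime x (2 ^ 2 * y)" using assms(1) by (simp only: coprime_mult_right_iff)
  moreover have "x * (2 ^ 2 * y) = (2 * k) ^ 3" using assms(3) by (simp add: power_mult_distrib)
  ultimately obtain s where "x = s ^ 3" using coprime_mult_eq_cube_int by blast
  moreover have "s \<noteq> 0" using assms(2) calculation by auto
  ultimately show ?thesis by blast
qed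

lemma add_cube_or_twice_cube:
  fixes a b C :: int
  assumes "coprime a C" "a ^ 2 + b ^ 3 = C ^ 2"
  shows "(\<exists>s. s \<noteq> 0 \<and> a + C = s ^ 3) \<or>
         (C \<noteq> 0 \<and> (\<exists>C' \<in> {C, - C}. \<exists>s. s \<noteq> 0 \<and> a + C' = 2 * s ^ 3))"
proof -
  define x y where "x = a + C" and "y = a - C"
  have xy: "x * y = (- b) ^ 3"
    using assms(2) unfolding x_def y_def by (simp add: algebra_simps power2_eq_square)
  have g2: "gcd x y dvd 2" unfolding x_def y_def using assms(1) by (rule gcd_add_diff_dvd_2)
  then have "0 < gcd x y" "gcd x y \<le> 2" using zdvd_imp_le by (auto intro: gcd_pos_int)
  then consider "coprime x y" | "gcd x y = 2"
    by (cases "gcd x y = 1") (auto simp: coprime_iff_gcd_eq_1)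
  then show ?thesis
  proof cases
    case 1
    then obtain s where s: "x = s ^ 3" using coprime_mult_eq_cube_int xy by blast
    moreover have "x \<noteq> 0"
    proof
      assume "x = 0"
      then have "is_unit y" using \<open>coprime x y\<close> by simp
      moreover have "y = 2 * a" using \<open>x = 0\<close> unfolding x_def y_def by linarith
      ultimately have "is_unit (2 :: int)" by (simp only: is_unit_mult_iff)
      then show False by simp
    qed
    ultimately show ?thesis unfolding x_def by auto
  next
    case 2
    then obtain x' y' where x': "x = 2 * x'" and y': "y = 2 * y'" by (metis dvdE gcd_dvd1 gcd_dvd2)
    have cop: "coprime x' y'" using 2 unfolding x' y' by (simp add: gcd_mult_left coprime_iff_gcd_eq_1)
    have "C \<noteq> 0"
    proof
      assume "C = 0"
      then have "is_unit a" using assms(1) by simp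
      then show False using 2 \<open>C = 0\<close> unfolding x_def y_def by (simp add: zdvd1_eq)
    qed
    have "even (x * y)" unfolding x' by simp
    then have "even ((- b) ^ 3)" by (simp only: xy)
    then obtain b' where "b = 2 * b'" by auto
    then have x'y': "x' * y' = 2 * (- b') ^ 3" using xy unfolding x' y' by (simp add: power_mult_distrib)
    have "odd x' \<or> odd y'" using coprime_common_divisor[OF cop, of 2] by auto
    then have "\<exists>C' \<in> {C, - C}. \<exists>s. s \<noteq> 0 \<and> a + C' = 2 * s ^ 3"
    proof
      assume "odd x'"
      then obtain s where "s \<noteq> 0" "x' = s ^ 3"
        using coprime_odd_mult_eq_twice_cube[OF cop _ x'y'] by blast
      then show ?thesis using x' unfolding x_def by auto
    next
      assume "odd y'"
      moreover have "coprime y' x'" using cop by (simp add: coprime_commute)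
      moreover have "y' * x' = 2 * (- b') ^ 3" using x'y' by (simp add: mult.commute)
      ultimately obtain s where "s \<noteq> 0" "y' = s ^ 3"
        using coprime_odd_mult_eq_twice_cube by blast
      then show ?thesis using y' unfolding y_def by auto
    qed
    with \<open>C \<noteq> 0\<close> show ?thesis by blast
  qed
qed

theorem lemma3p4:
  fixes a b c :: int
  assumes "gcd a (gcd b c) = 1"
    and "a ^ 2 + b ^ 3 = c ^ 10"
    and "irreducible [:- 2 * of_int a, 3 * of_int b, 0, 1 :: rat:]"
  shows "fields_isomorphic (splitting_field_C [:- 2 * of_int a, 3 * of_int b, 0, 1 :: rat:])
                           (splitting_field_C [:- 6, - 6, 0, 1 :: rat:])"
proof -
  define C where "C = c ^ 5"
  have sum: "a ^ 2 + b ^ 3 = C ^ 2" using assms(2) by (simp add: C_def flip: power_mult)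
  have sum_rat: "of_int C ^ 2 = of_int a ^ 2 + (of_int b :: rat) ^ 3"
    using arg_cong[OF sum, of "of_int :: int \<Rightarrow> rat"] by simp
  have "coprime a C" using coprime_of_primitive_power_sum[OF assms(1,2)] by (simp add: C_def)
  moreover have "\<nexists>s. s \<noteq> 0 \<and> a + C = s ^ 3"
  proof
    assume "\<exists>s. s \<noteq> 0 \<and> a + C = s ^ 3"
    then obtain s where "s \<noteq> 0" "(of_int s :: rat) ^ 3 = of_int a + of_int C"
      by (metis of_int_add of_int_power)
    then show False
      using irreducible_depressed_cubic_no_cardano_cube[OF assms(3) sum_rat, of "of_int s"] by simp
  qed
  ultimately obtain C' s where C': "C \<noteq> 0" "C' \<in> {C, - C}" and s: "s \<noteq> 0" "a + C' = 2 * s ^ 3"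
    using add_cube_or_twice_cube[OF _ sum] by blast
  have "of_int a + of_int C' = 2 * (of_int s :: rat) ^ 3"
    using arg_cong[OF s(2), of "of_int :: int \<Rightarrow> rat"] by simp
  then have "splitting_field_C [:- 2 * of_int a, 3 * of_int b, 0, 1 :: rat:]
      = splitting_field_C [:- 6, - 6, 0, 1 :: rat:]"
    using C' s(1) sum_rat by (intro splitting_field_C_depressed_cubic_twice_cube) auto
  then show ?thesis unfolding fields_isomorphic_def by (intro exI[of _ id]) simp
qed

end
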